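(* Let $A \in \mathbb{R}^{m\times n}$, $B \in \mathbb{R}^{n\times m}$, nonzero $b\in\mathbb{R}^m$, $c\in\mathbb{R}^n$, $\lambda,\mu\in\mathbb{R}$, $K := \begin{bmatrix} \lambda I_m & A \\ B & \mu I_n\end{bmatrix}$, $d := (b,c) \in \mathbb{R}^{m+n}$ and $D := \begin{bmatrix} b & 0 \\ 0 & c\end{bmatrix} \in \mathbb{R}^{(m+n)\times 2}$. Let $k\ge 1$ and suppose the orthogonal Hessenberg reduction process (described in the context) runs without breakdown for $k-1$ steps. Then: (i) the column space of $W_k$ equals the block Krylov subspace $\mathcal{K}_k(K,D) := \operatorname{span}\{\text{columns of } D, KD, \ldots, K^{k-1}D\}$; (ii) $\mathcal{K}_k(K,d) := \operatorname{span}\{d, Kd, \ldots, K^{k-1}d\} \subseteq \mathcal{K}_k(K,D)$; (iii) consequently $\min_{z\in\mathbb{R}^{2k}} \|d - K W_k z\| \le \min_{x \in \mathcal{K}_k(K,d)} \|d - Kx\|$, i.e. the residual norm of the minimum-residual iterate over the column space of $W_k$ is at most the residual norm of the $k$-th \textsc{Gmres} iterate (with zero initial guess) for $Kx = d$.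
   Context: Orthogonal Hessenberg reduction process. Given $A \in \mathbb{R}^{m\times n}$, $B\in\mathbb{R}^{n\times m}$ and nonzero $b\in\mathbb{R}^m$, $c \in \mathbb{R}^n$: set $\beta = \|b\|$, $\gamma = \|c\|$, $v_1 = b/\beta$, $u_1 = c/\gamma$. For $k=1,2,\ldots$: for $i=1,\ldots,k$ set $h_{i,k} = v_i^T A u_k$ and $f_{i,k} = u_i^T B v_k$; set $q = A u_k - \sum_{i=1}^k h_{i,k} v_i$, $p = B v_k - \sum_{i=1}^k f_{i,k} u_i$, $h_{k+1,k} = \|q\|$, $f_{k+1,k} = \|p\|$, $v_{k+1} = q/h_{k+1,k}$, $u_{k+1} = p/f_{k+1,k}$. The process runs without breakdown for $k$ steps if $h_{j+1,j}>0$ and $f_{j+1,j}>0$ for $j=1,\ldots,k$. Norms are Euclidean. For $i \le k$ define $v_i^\circ := (v_i, 0) \in \mathbb{R}^{m+n}$ and $u_i^\circ := (0,u_i)\in\mathbb{R}^{m+n}$, and $W_k := \begin{bmatrix} v_1^\circ & u_1^\circ & v_2^\circ & u_2^\circ & \cdots & v_k^\circ & u_k^\circ\end{bmatrix} \in \mathbb{R}^{(m+n)\times 2k}$. *)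

theory Defs
  imports "HOL-Analysis.Analysis"
begin

primrec matpow :: "real^'a^'a \<Rightarrow> nat \<Rightarrow> real^'a^'a" where
  "matpow K 0 = mat 1"
| "matpow K (Suc j) = K ** matpow K j"

definition embl :: "real^'m \<Rightarrow> real^('m::finite + 'n::finite)" where
  "embl v = (\<chi> x. case x of Inl i \<Rightarrow> v $ i | Inr _ \<Rightarrow> 0)"

definition embr :: "real^'n \<Rightarrow> real^('m::finite + 'n::finite)" where
  "embr u = (\<chi> x. case x of Inl _ \<Rightarrow> 0 | Inr j \<Rightarrow> u $ j)"

definition blockK :: "real \<Rightarrow> real \<Rightarrow> real^'n^'m \<Rightarrow> real^'m^'n \<Rightarrow> real^('m+'n)^('m+'n)" where
  "blockK lam mu A B = (\<chi> r s. case (r, s) of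
      (Inl i, Inl j) \<Rightarrow> (if i = j then lam else 0)
    | (Inl i, Inr j) \<Rightarrow> A $ i $ j
    | (Inr i, Inl j) \<Rightarrow> B $ i $ j
    | (Inr i, Inr j) \<Rightarrow> (if i = j then mu else 0))"

definition ohr_q :: "real^'n^'m \<Rightarrow> (nat \<Rightarrow> real^'m) \<Rightarrow> (nat \<Rightarrow> real^'n) \<Rightarrow> nat \<Rightarrow> real^'m" where
  "ohr_q A V U k = A *v U k - (\<Sum>i=1..k. (V i \<bullet> (A *v U k)) *\<^sub>R V i)"

definition ohr_p :: "real^'m^'n \<Rightarrow> (nat \<Rightarrow> real^'m) \<Rightarrow> (nat \<Rightarrow> real^'n) \<Rightarrow> nat \<Rightarrow> real^'n" where
  "ohr_p B V U k = B *v V k - (\<Sum>i=1..k. (U i \<bullet> (B *v V k)) *\<^sub>R U i)"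

text \<open>ohr_basis A B b c j holds (V, U) with V i = v_i and U i = u_i valid for 1 \<le> i \<le> j+1,
  i.e. the state after j steps of the orthogonal Hessenberg reduction process.\<close>
primrec ohr_basis :: "real^'n^'m \<Rightarrow> real^'m^'n \<Rightarrow> real^'m \<Rightarrow> real^'n \<Rightarrow> nat
     \<Rightarrow> (nat \<Rightarrow> real^'m) \<times> (nat \<Rightarrow> real^'n)" where
  "ohr_basis A B b c 0 = ((\<lambda>_. (1 / norm b) *\<^sub>R b), (\<lambda>_. (1 / norm c) *\<^sub>R c))"
| "ohr_basis A B b c (Suc j) =
     (let V = fst (ohr_basis A B b c j); U = snd (ohr_basis A B b c j);
          q = ohr_q A V U (Suc j); p = ohr_p B V U (Suc j)
      in (V(Suc (Suc j) := (1 / norm q) *\<^sub>R q), U(Suc (Suc j) := (1 / norm p) *\<^sub>R p)))"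

definition ohr_v :: "real^'n^'m \<Rightarrow> real^'m^'n \<Rightarrow> real^'m \<Rightarrow> real^'n \<Rightarrow> nat \<Rightarrow> real^'m" where
  "ohr_v A B b c i = fst (ohr_basis A B b c (i - 1)) i"

definition ohr_u :: "real^'n^'m \<Rightarrow> real^'m^'n \<Rightarrow> real^'m \<Rightarrow> real^'n \<Rightarrow> nat \<Rightarrow> real^'n" where
  "ohr_u A B b c i = snd (ohr_basis A B b c (i - 1)) i"

definition ohr_hsub :: "real^'n^'m \<Rightarrow> real^'m^'n \<Rightarrow> real^'m \<Rightarrow> real^'n \<Rightarrow> nat \<Rightarrow> real" where
  "ohr_hsub A B b c k = norm (ohr_q A (fst (ohr_basis A B b c (k - 1))) (snd (ohr_basis A B b c (k - 1))) k)"

definition ohr_fsub :: "real^'n^'m \<Rightarrow> real^'m^'n \<Rightarrow> real^'m \<Rightarrow> real^'n \<Rightarrow> nat \<Rightarrow> real" where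
  "ohr_fsub A B b c k = norm (ohr_p B (fst (ohr_basis A B b c (k - 1))) (snd (ohr_basis A B b c (k - 1))) k)"

definition ohr_no_breakdown :: "real^'n^'m \<Rightarrow> real^'m^'n \<Rightarrow> real^'m \<Rightarrow> real^'n \<Rightarrow> nat \<Rightarrow> bool" where
  "ohr_no_breakdown A B b c k \<longleftrightarrow>
     (\<forall>j\<in>{1..k}. ohr_hsub A B b c j > 0 \<and> ohr_fsub A B b c j > 0)"

definition W_cols :: "real^'n^'m \<Rightarrow> real^'m^'n \<Rightarrow> real^'m \<Rightarrow> real^'n \<Rightarrow> nat \<Rightarrow> (real^('m+'n)) set" where
  "W_cols A B b c k = (\<lambda>i. embl (ohr_v A B b c i)) ` {1..k} \<union> (\<lambda>i. embr (ohr_u A B b c i)) ` {1..k}"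

text \<open>W_k z for z in R^{2k}, represented as z :: nat \<Rightarrow> real with entries z 1, ..., z (2k).\<close>
definition W_mul :: "real^'n^'m \<Rightarrow> real^'m^'n \<Rightarrow> real^'m \<Rightarrow> real^'n \<Rightarrow> nat \<Rightarrow> (nat \<Rightarrow> real) \<Rightarrow> real^('m+'n)" where
  "W_mul A B b c k z = (\<Sum>i=1..k. z (2*i - 1) *\<^sub>R embl (ohr_v A B b c i) + z (2*i) *\<^sub>R embr (ohr_u A B b c i))"

definition krylov :: "real^'a^'a \<Rightarrow> real^'a \<Rightarrow> nat \<Rightarrow> (real^'a) set" where
  "krylov K d k = span ((\<lambda>j. matpow K j *v d) ` {..<k})"

definition block_krylov :: "real^'a^'a \<Rightarrow> real^'a \<Rightarrow> real^'a \<Rightarrow> nat \<Rightarrow> (real^'a) set" where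
  "block_krylov K d1 d2 k = span ((\<lambda>j. matpow K j *v d1) ` {..<k} \<union> (\<lambda>j. matpow K j *v d2) ` {..<k})"

end

theory Submission
  imports Defs
begin

(*
  Write v' = embl v and u' = embr u. Then K v' = lam v' + (B v)' and K u' = (A u)' + mu u'.
  The recurrences of the process express A u_k and B v_k in terms of v_1, ..., v_(k+1)
  resp. u_1, ..., u_(k+1) and, conversely, v_(k+1) and u_(k+1) in terms of A u_k, B v_k
  and earlier basis vectors. Hence span W_(k+1) = span (W_k \<union> K W_k), the same recursion
  as the generators of the block Krylov spaces, and both start from span {b', c'}.
  Since d = b' + c', every K^j d lies in the block Krylov space, and the residual bound
  holds because the left-hand minimum is taken over a larger set.
*)

lemma sum_UNIV_Plus:
  "(\<Sum>x\<in>(UNIV::('a::finite + 'b::finite) set). f x) = (\<Sum>i\<in>UNIV. f (Inl i)) + (\<Sum>j\<in>UNIV. f (Inr j))"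
  by (subst UNIV_Plus_UNIV[symmetric], subst sum.Plus) (simp_all add: comp_def)

lemma linear_embl: "linear (embl :: real^'m::finite \<Rightarrow> real^('m + 'n::finite))"
  by (auto simp: linear_iff vec_eq_iff embl_def split: sum.split)

lemma linear_embr: "linear (embr :: real^'n::finite \<Rightarrow> real^('m::finite + 'n))"
  by (auto simp: linear_iff vec_eq_iff embr_def split: sum.split)

lemmas embl_linear_simps =
  linear_add[OF linear_embl] linear_diff[OF linear_embl] linear_scale[OF linear_embl] linear_sum[OF linear_embl]
lemmas embr_linear_simps =
  linear_add[OF linear_embr] linear_diff[OF linear_embr] linear_scale[OF linear_embr] linear_sum[OF linear_embr]

lemma blockK_embl: "blockK lam mu A B *v embl v = lam *\<^sub>R embl v + embr (B *v v)"
  by (auto simp: vec_eq_iff matrix_vector_mult_def blockK_def embl_def embr_def sum_UNIV_Plus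
      if_distrib[of "\<lambda>t. t * _"] cong: if_cong split: sum.split)

lemma blockK_embr: "blockK lam mu A B *v embr u = embl (A *v u) + mu *\<^sub>R embr u"
  by (auto simp: vec_eq_iff matrix_vector_mult_def blockK_def embl_def embr_def sum_UNIV_Plus
      if_distrib[of "\<lambda>t. t * _"] cong: if_cong split: sum.split)

lemma ohr_basis_eq:
  assumes "1 \<le> i" "i \<le> Suc j"
  shows "fst (ohr_basis A B b c j) i = ohr_v A B b c i \<and> snd (ohr_basis A B b c j) i = ohr_u A B b c i"
  using assms
proof (induction j arbitrary: i)
  case 0
  then show ?case by (simp add: ohr_v_def ohr_u_def)
next
  case (Suc j)
  then show ?case
    by (cases "i = Suc (Suc j)") (simp_all add: ohr_v_def ohr_u_def Let_def)
qed

lemma ohr_Suc: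
  assumes "1 \<le> k"
  shows "ohr_v A B b c (Suc k) = (1 / norm (ohr_q A (ohr_v A B b c) (ohr_u A B b c) k)) *\<^sub>R ohr_q A (ohr_v A B b c) (ohr_u A B b c) k"
    and "ohr_u A B b c (Suc k) = (1 / norm (ohr_p B (ohr_v A B b c) (ohr_u A B b c) k)) *\<^sub>R ohr_p B (ohr_v A B b c) (ohr_u A B b c) k"
proof -
  obtain j where k: "k = Suc j" using assms by (cases k) auto
  have V: "fst (ohr_basis A B b c j) i = ohr_v A B b c i" and U: "snd (ohr_basis A B b c j) i = ohr_u A B b c i"
    if "i \<in> {1..k}" for i
    using ohr_basis_eq[of i j] k that by auto
  have "ohr_q A (fst (ohr_basis A B b c j)) (snd (ohr_basis A B b c j)) k = ohr_q A (ohr_v A B b c) (ohr_u A B b c) k"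
    "ohr_p B (fst (ohr_basis A B b c j)) (snd (ohr_basis A B b c j)) k = ohr_p B (ohr_v A B b c) (ohr_u A B b c) k"
    unfolding ohr_q_def ohr_p_def using U V assms by (auto intro!: sum.cong)
  then show "ohr_v A B b c (Suc k) = (1 / norm (ohr_q A (ohr_v A B b c) (ohr_u A B b c) k)) *\<^sub>R ohr_q A (ohr_v A B b c) (ohr_u A B b c) k"
    and "ohr_u A B b c (Suc k) = (1 / norm (ohr_p B (ohr_v A B b c) (ohr_u A B b c) k)) *\<^sub>R ohr_p B (ohr_v A B b c) (ohr_u A B b c) k"
    by (simp_all add: ohr_v_def ohr_u_def k Let_def)
qed

lemma scaleR_norm_normalize: "norm x *\<^sub>R ((1 / norm x) *\<^sub>R x) = (x :: 'a::real_normed_vector)"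
  by (cases "x = 0") auto

(*
  These hold even after a breakdown: the new vector is then (1 / 0) *R 0 = 0 and the
  expansion just says q = 0 resp. p = 0.
*)

lemma ohr_A_u_expansion:
  assumes "1 \<le> i"
  shows "A *v ohr_u A B b c i = norm (ohr_q A (ohr_v A B b c) (ohr_u A B b c) i) *\<^sub>R ohr_v A B b c (Suc i)
           + (\<Sum>l=1..i. (ohr_v A B b c l \<bullet> (A *v ohr_u A B b c i)) *\<^sub>R ohr_v A B b c l)"
  by (simp add: ohr_Suc[OF assms] scaleR_norm_normalize) (simp add: ohr_q_def)

lemma ohr_B_v_expansion:
  assumes "1 \<le> i"
  shows "B *v ohr_v A B b c i = norm (ohr_p B (ohr_v A B b c) (ohr_u A B b c) i) *\<^sub>R ohr_u A B b c (Suc i)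
           + (\<Sum>l=1..i. (ohr_u A B b c l \<bullet> (B *v ohr_v A B b c i)) *\<^sub>R ohr_u A B b c l)"
  by (simp add: ohr_Suc[OF assms] scaleR_norm_normalize) (simp add: ohr_p_def)

lemma W_cols_Suc:
  "W_cols A B b c (Suc k) = insert (embl (ohr_v A B b c (Suc k))) (insert (embr (ohr_u A B b c (Suc k))) (W_cols A B b c k))"
  by (auto simp: W_cols_def atLeastAtMostSuc_conv)

lemma W_cols_Suc_subset_span:
  assumes "1 \<le> k"
  shows "W_cols A B b c (Suc k) \<subseteq> span (W_cols A B b c k \<union> (*v) (blockK lam mu A B) ` W_cols A B b c k)"
proof -
  let ?v = "ohr_v A B b c" and ?u = "ohr_u A B b c" and ?G = "W_cols A B b c k"
  let ?S = "span (?G \<union> (*v) (blockK lam mu A B) ` ?G)"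
  have col: "embl (?v i) \<in> ?S" "embr (?u i) \<in> ?S" "blockK lam mu A B *v embl (?v i) \<in> ?S"
    "blockK lam mu A B *v embr (?u i) \<in> ?S" if "i \<in> {1..k}" for i
    using that by (auto simp: W_cols_def intro: span_base)
  have "embl (?v (Suc k)) = (1 / norm (ohr_q A ?v ?u k)) *\<^sub>R
      (blockK lam mu A B *v embr (?u k) - mu *\<^sub>R embr (?u k) - (\<Sum>i=1..k. (?v i \<bullet> (A *v ?u k)) *\<^sub>R embl (?v i)))"
    by (simp add: ohr_Suc[OF assms] blockK_embr ohr_q_def embl_linear_simps)
  moreover have "embr (?u (Suc k)) = (1 / norm (ohr_p B ?v ?u k)) *\<^sub>R
      (blockK lam mu A B *v embl (?v k) - lam *\<^sub>R embl (?v k) - (\<Sum>i=1..k. (?u i \<bullet> (B *v ?v k)) *\<^sub>R embr (?u i)))"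
    by (simp add: ohr_Suc[OF assms] blockK_embl ohr_p_def embr_linear_simps)
  ultimately have "embl (?v (Suc k)) \<in> ?S" "embr (?u (Suc k)) \<in> ?S"
    using assms by (auto intro!: span_scale span_diff span_sum col)
  then show ?thesis
    unfolding W_cols_Suc by (auto intro: span_base)
qed

lemma blockK_image_W_cols_subset_span:
  "(*v) (blockK lam mu A B) ` W_cols A B b c k \<subseteq> span (W_cols A B b c (Suc k))"
proof -
  let ?v = "ohr_v A B b c" and ?u = "ohr_u A B b c" and ?G' = "W_cols A B b c (Suc k)"
  have col: "embl (?v i) \<in> span ?G'" "embr (?u i) \<in> span ?G'" if "i \<in> {1..Suc k}" for i
    using that by (auto simp: W_cols_def intro: span_base)
  have "blockK lam mu A B *v embl (?v i) \<in> span ?G'" "blockK lam mu A B *v embr (?u i) \<in> span ?G'"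
    if i: "i \<in> {1..k}" for i
  proof -
    from i have "1 \<le> i" by simp
    show "blockK lam mu A B *v embl (?v i) \<in> span ?G'"
      unfolding blockK_embl ohr_B_v_expansion[OF \<open>1 \<le> i\<close>, THEN arg_cong[where f = embr]] embr_linear_simps
      using i by (auto intro!: span_add span_scale span_sum col)
    show "blockK lam mu A B *v embr (?u i) \<in> span ?G'"
      unfolding blockK_embr ohr_A_u_expansion[OF \<open>1 \<le> i\<close>, THEN arg_cong[where f = embl]] embl_linear_simps
      using i by (auto intro!: span_add span_scale span_sum col)
  qed
  then show ?thesis
    by (auto simp: W_cols_def)
qed

lemma span_W_cols_Suc:
  assumes "1 \<le> k"
  shows "span (W_cols A B b c (Suc k)) = span (W_cols A B b c k \<union> (*v) (blockK lam mu A B) ` W_cols A B b c k)"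
proof -
  have "W_cols A B b c k \<subseteq> W_cols A B b c (Suc k)"
    by (auto simp: W_cols_Suc)
  then show ?thesis
    unfolding span_eq using W_cols_Suc_subset_span[OF assms] blockK_image_W_cols_subset_span span_superset
    by blast
qed

lemma span_W_cols_1:
  assumes "b \<noteq> 0" "c \<noteq> 0"
  shows "span (W_cols A B b c 1) = span {embl b, embr c}"
proof -
  let ?W = "{(1 / norm b) *\<^sub>R embl b, (1 / norm c) *\<^sub>R embr c}"
  have W: "W_cols A B b c 1 = ?W"
    by (auto simp: W_cols_def ohr_v_def ohr_u_def embl_linear_simps embr_linear_simps)
  have "(1 / norm b) *\<^sub>R embl b \<in> span ?W" "(1 / norm c) *\<^sub>R embr c \<in> span ?W"
    by (simp_all add: span_base)
  from span_scale[OF this(1), of "norm b"] span_scale[OF this(2), of "norm c"]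
  have "embl b \<in> span ?W" "embr c \<in> span ?W"
    using assms by simp_all
  then show ?thesis
    unfolding W by (simp add: span_eq span_base span_scale)
qed

lemma matpow_image_lessThan_Suc:
  fixes K :: "real^'a^'a" and x :: "real^'a"
  assumes "1 \<le> k"
  defines "X \<equiv> \<lambda>k. (\<lambda>j. matpow K j *v x) ` {..<k}"
  shows "X (Suc k) = X k \<union> (*v) K ` X k"
proof -
  have insert: "X (Suc n) = insert x ((*v) K ` X n)" for n
    by (simp add: X_def lessThan_Suc_eq_insert_0 image_image matrix_vector_mul_assoc)
  have "X k \<subseteq> X (Suc k)"
    by (auto simp: X_def)
  moreover have "x \<in> X k"
    using assms by (auto simp: X_def intro!: image_eqI[of _ _ 0])
  ultimately show ?thesis
    unfolding insert by blast
qed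

lemma span_Un_image_mono:
  assumes "linear f" "X \<subseteq> span Y"
  shows "span (X \<union> f ` X) \<subseteq> span (Y \<union> f ` Y)"
proof -
  have "f ` X \<subseteq> span (f ` Y)"
    using assms span_linear_image[OF assms(1)] by blast
  then show ?thesis
    using assms(2) span_mono[of Y "Y \<union> f ` Y"] span_mono[of "f ` Y" "Y \<union> f ` Y"]
    by (intro span_minimal) auto
qed

lemma span_Un_image_cong:
  assumes "linear f" "span X = span Y"
  shows "span (X \<union> f ` X) = span (Y \<union> f ` Y)"
  using assms span_Un_image_mono[OF assms(1)] span_superset by (metis subset_antisym)

lemma block_krylov_Suc:
  fixes K :: "real^'a^'a" and d1 d2 :: "real^'a"
  assumes "1 \<le> k"
  defines "G \<equiv> (\<lambda>j. matpow K j *v d1) ` {..<k} \<union> (\<lambda>j. matpow K j *v d2) ` {..<k}"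
  shows "block_krylov K d1 d2 (Suc k) = span (G \<union> (*v) K ` G)"
  unfolding block_krylov_def G_def matpow_image_lessThan_Suc[OF assms(1)] image_Un
  by (simp only: Un_ac)

lemma span_W_cols_eq_block_krylov:
  assumes "b \<noteq> 0" "c \<noteq> 0" "1 \<le> k"
  shows "span (W_cols A B b c k) = block_krylov (blockK lam mu A B) (embl b) (embr c) k"
  using assms(3)
proof (induction k rule: nat_induct_at_least)
  case base
  have "{..<1::nat} = {0}" by auto
  then show ?case
    using span_W_cols_1[OF assms(1,2)] by (simp add: block_krylov_def insert_commute)
next
  case (Suc k)
  then show ?case
    unfolding span_W_cols_Suc[OF Suc.hyps, where lam = lam and mu = mu] block_krylov_Suc[OF Suc.hyps]
    by (intro span_Un_image_cong matrix_vector_mul_linear) (simp add: block_krylov_def)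
qed

lemma krylov_add_subset_block_krylov: "krylov K (d1 + d2) k \<subseteq> block_krylov K d1 d2 k"
  unfolding krylov_def block_krylov_def
proof (intro span_minimal subspace_span image_subsetI)
  fix j assume "j \<in> {..<k}"
  then show "matpow K j *v (d1 + d2) \<in> span ((\<lambda>j. matpow K j *v d1) ` {..<k} \<union> (\<lambda>j. matpow K j *v d2) ` {..<k})"
    unfolding matrix_vector_right_distrib by (intro span_add span_base) auto
qed

lemma subspace_range_W_mul: "subspace (range (W_mul A B b c k))"
  unfolding subspace_def
proof (intro conjI ballI allI)
  have "W_mul A B b c k (\<lambda>_. 0) = 0"
    by (simp add: W_mul_def)
  then show "0 \<in> range (W_mul A B b c k)"
    by (metis rangeI)
next
  fix x y assume "x \<in> range (W_mul A B b c k)" "y \<in> range (W_mul A B b c k)"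
  then obtain z1 z2 where "x = W_mul A B b c k z1" "y = W_mul A B b c k z2"
    by auto
  then have "x + y = W_mul A B b c k (\<lambda>i. z1 i + z2 i)"
    by (simp add: W_mul_def scaleR_add_left sum.distrib algebra_simps)
  then show "x + y \<in> range (W_mul A B b c k)"
    by simp
next
  fix a :: real and x assume "x \<in> range (W_mul A B b c k)"
  then obtain z where "x = W_mul A B b c k z"
    by auto
  then have "a *\<^sub>R x = W_mul A B b c k (\<lambda>i. a * z i)"
    by (simp add: W_mul_def scaleR_sum_right scaleR_add_right)
  then show "a *\<^sub>R x \<in> range (W_mul A B b c k)"
    by simp
qed

lemma W_cols_subset_range_W_mul: "W_cols A B b c k \<subseteq> range (W_mul A B b c k)"
proof -
  have "W_mul A B b c k (\<lambda>t. if t = 2 * i - 1 then 1 else 0) = embl (ohr_v A B b c i)"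
    "W_mul A B b c k (\<lambda>t. if t = 2 * i then 1 else 0) = embr (ohr_u A B b c i)"
    if i: "i \<in> {1..k}" for i
  proof -
    have parity: "2 * l \<noteq> 2 * i - 1" "2 * l - 1 \<noteq> 2 * i" if "l \<in> {1..k}" for l
      using i that by presburger+
    show "W_mul A B b c k (\<lambda>t. if t = 2 * i - 1 then 1 else 0) = embl (ohr_v A B b c i)"
      unfolding W_mul_def using i parity
      by (subst sum.cong[OF refl, of _ _ "\<lambda>l. if l = i then embl (ohr_v A B b c i) else 0"]) auto
    show "W_mul A B b c k (\<lambda>t. if t = 2 * i then 1 else 0) = embr (ohr_u A B b c i)"
      unfolding W_mul_def using i parity
      by (subst sum.cong[OF refl, of _ _ "\<lambda>l. if l = i then embr (ohr_u A B b c i) else 0"]) auto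
  qed
  then show ?thesis
    unfolding W_cols_def by (metis (no_types, lifting) image_subset_iff rangeI Un_subset_iff)
qed

lemma span_W_cols_subset_range_W_mul: "span (W_cols A B b c k) \<subseteq> range (W_mul A B b c k)"
  by (rule span_minimal[OF W_cols_subset_range_W_mul subspace_range_W_mul])

lemma INF_range_le_INF_subset:
  fixes g :: "'a \<Rightarrow> real"
  assumes "S \<noteq> {}" "S \<subseteq> range f" "\<And>x. 0 \<le> g x"
  shows "(INF z. g (f z)) \<le> (INF x\<in>S. g x)"
proof (rule cINF_greatest[OF assms(1)])
  fix x assume "x \<in> S"
  then obtain z where "x = f z"
    using assms(2) by auto
  then show "(INF z. g (f z)) \<le> g x"
    using assms(3) by (auto intro!: cINF_lower bdd_belowI[of _ 0])
qed

theorem mainTheorem5: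
  fixes A :: "real^'n::finite^'m::finite" and B :: "real^'m^'n"
    and b :: "real^'m" and c :: "real^'n" and lam mu :: real and k :: nat
  assumes "b \<noteq> 0" and "c \<noteq> 0" and "k \<ge> 1"
    and "ohr_no_breakdown A B b c (k - 1)"
  defines "K \<equiv> blockK lam mu A B"
    and "d \<equiv> embl b + embr c"
  shows "span (W_cols A B b c k) = block_krylov K (embl b) (embr c) k
         \<and> krylov K d k \<subseteq> block_krylov K (embl b) (embr c) k
         \<and> (INF z. norm (d - K *v W_mul A B b c k z)) \<le> (INF x\<in>krylov K d k. norm (d - K *v x))"
proof (intro conjI)
  show span: "span (W_cols A B b c k) = block_krylov K (embl b) (embr c) k"
    unfolding K_def using assms(1-3) by (rule span_W_cols_eq_block_krylov)
  show krylov: "krylov K d k \<subseteq> block_krylov K (embl b) (embr c) k"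
    unfolding d_def by (rule krylov_add_subset_block_krylov)
  have "krylov K d k \<subseteq> range (W_mul A B b c k)"
    using span krylov span_W_cols_subset_range_W_mul by blast
  moreover have "krylov K d k \<noteq> {}"
    unfolding krylov_def using span_zero by blast
  ultimately show "(INF z. norm (d - K *v W_mul A B b c k z)) \<le> (INF x\<in>krylov K d k. norm (d - K *v x))"
    by (intro INF_range_le_INF_subset) auto
qed

end
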